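(* Let $K$ be a finite extension of $\mathbb Q$, $\mathcal O$ its ring of integers, $B\subset\mathcal O$ an order, $S\subset B$ a multiplicatively closed subset and $A=B_S$. Let $\mu:A^2\to U(k)$ be a finite-dimensional unitary representation of the additive group $A^2$ whose character is $SL(2,A)$-invariant, i.e. $\mathrm{tr}\,\mu(g.t)=\mathrm{tr}\,\mu(t)$ for all $g\in SL(2,A)$, $t\in A^2$ (with $SL(2,A)$ acting on $A^2$ by matrix multiplication). Then there exists a nonzero $q\in\mathbb N$ such that $\mu$ is trivial on $(qA)^2$, i.e. $\mu$ factors through $(A/qA)^2$. *)

theory Defs
  imports "HOL-Analysis.Analysis" "HOL-Computational_Algebra.Polynomial"
begin

text \<open>Number fields are realised as subfields of the complex numbers.\<close>

definition subfield_C :: "complex set \<Rightarrow> bool" where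
  "subfield_C K \<longleftrightarrow> 0 \<in> K \<and> 1 \<in> K \<and>
     (\<forall>x\<in>K. \<forall>y\<in>K. x + y \<in> K \<and> x - y \<in> K \<and> x * y \<in> K) \<and>
     (\<forall>x\<in>K. x \<noteq> 0 \<longrightarrow> inverse x \<in> K)"

definition number_field :: "complex set \<Rightarrow> bool" where
  "number_field K \<longleftrightarrow> subfield_C K \<and>
     (\<exists>bs::complex list. set bs \<subseteq> K \<and>
        (\<forall>x\<in>K. \<exists>c::nat \<Rightarrow> rat. x = (\<Sum>i<length bs. of_rat (c i) * bs ! i)))"

definition ring_of_integers :: "complex set \<Rightarrow> complex set" where
  "ring_of_integers K = {x \<in> K. algebraic_int x}"

definition subring_C :: "complex set \<Rightarrow> bool" where
  "subring_C B \<longleftrightarrow> 1 \<in> B \<and> (\<forall>x\<in>B. \<forall>y\<in>B. x + y \<in> B \<and> x - y \<in> B \<and> x * y \<in> B)"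

definition is_order :: "complex set \<Rightarrow> complex set \<Rightarrow> bool" where
  "is_order K B \<longleftrightarrow> subring_C B \<and> B \<subseteq> ring_of_integers K \<and>
     (\<exists>F. finite F \<and> (\<forall>x\<in>ring_of_integers K. \<exists>f\<in>F. x - f \<in> B))"

definition mult_closed :: "complex set \<Rightarrow> bool" where
  "mult_closed S \<longleftrightarrow> 1 \<in> S \<and> (\<forall>x\<in>S. \<forall>y\<in>S. x * y \<in> S)"

text \<open>Localisation B_S inside K (for 0 not in S).\<close>
definition localization :: "complex set \<Rightarrow> complex set \<Rightarrow> complex set" where
  "localization B S = {b / s | b s. b \<in> B \<and> s \<in> S}"

definition conj_transpose :: "complex^'k^'k \<Rightarrow> complex^'k^'k" where
  "conj_transpose U = (\<chi> i j. cnj (U $ j $ i))"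

definition unitary_mat :: "complex^'k^'k \<Rightarrow> bool" where
  "unitary_mat U \<longleftrightarrow> U ** conj_transpose U = mat 1 \<and> conj_transpose U ** U = mat 1"

definition SL2 :: "complex set \<Rightarrow> ((complex \<times> complex) \<times> (complex \<times> complex)) set" where
  "SL2 A = {((a,b),(c,d)). a \<in> A \<and> b \<in> A \<and> c \<in> A \<and> d \<in> A \<and> a * d - b * c = 1}"

fun SL2_act :: "(complex \<times> complex) \<times> (complex \<times> complex) \<Rightarrow> complex \<times> complex \<Rightarrow> complex \<times> complex" where
  "SL2_act ((a,b),(c,d)) (x,y) = (a * x + b * y, c * x + d * y)"

end

theory Submission
  imports Defs "HOL-Computational_Algebra.Fundamental_Theorem_Algebra"
begin

(*
  A commuting family of matrices closed under conjugate transpose has an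
     orthonormal basis of joint eigenvectors (via the fundamental theorem of algebra), and a
     unitary matrix of trace k is the identity.
  2. Characters.  Hence mu is a sum of k characters ch_e of A^2 and trace (mu t) = sum_e ch_e t.
     By Dedekind's independence of characters a finite family of characters is determined by
     its sum, so SL(2,A)-invariance of the trace means SL(2,A) permutes the family.
  3. Periods.  Each ch_e therefore has a finite orbit under the unipotent matrices
     ((1,m),(0,1)) and ((1,0),(m,1)); two equal twists yield Q > 0 with ch_e trivial on
     (QA)^2.  The product q of these periods kills every ch_e on (qA)^2, so
     trace (mu t) = k there and mu t is the identity.
*)

definition poly_apply :: "complex poly \<Rightarrow> complex^'k^'k \<Rightarrow> complex^'k \<Rightarrow> complex^'k" where
  "poly_apply p M w = (\<Sum>i\<le>degree p. coeff p i *s (((*v) M) ^^ i) w)"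

lemma poly_apply_upto:
  assumes "degree p \<le> N"
  shows "poly_apply p M w = (\<Sum>i\<le>N. coeff p i *s (((*v) M) ^^ i) w)"
  unfolding poly_apply_def
  by (rule sum.mono_neutral_left) (use assms in \<open>auto simp: coeff_eq_0\<close>)

lemma poly_apply_linear_factor:
  "poly_apply ([:-c, 1:] * r) M w = M *v poly_apply r M w - c *s poly_apply r M w"
proof -
  let ?X = "\<lambda>i. (((*v) M) ^^ i) w"
  let ?N = "Suc (degree r)"
  have deg: "degree ([:-c, 1:] * r) \<le> ?N"
    using degree_mult_le[of "[:-c, 1:]" r] by simp
  have coeff: "coeff ([:-c, 1:] * r) i = coeff (pCons 0 r) i - c * coeff r i" for i
    by simp
  have "poly_apply ([:-c, 1:] * r) M w
      = (\<Sum>i\<le>?N. coeff (pCons 0 r) i *s ?X i) - c *s (\<Sum>i\<le>?N. coeff r i *s ?X i)"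
    unfolding poly_apply_upto[OF deg] coeff
    by (simp add: vector_sub_rdistrib sum_subtractf vec.scale_sum_right vector_smult_assoc)
  also have "(\<Sum>i\<le>?N. coeff (pCons 0 r) i *s ?X i) = (\<Sum>i\<le>degree r. coeff r i *s ?X (Suc i))"
    by (subst sum.atMost_Suc_shift) simp
  also have "\<dots> = M *v poly_apply r M w"
    by (simp add: poly_apply_def vec.sum vec.scale)
  also have "(\<Sum>i\<le>?N. coeff r i *s ?X i) = poly_apply r M w"
    by (rule poly_apply_upto[symmetric]) simp
  finally show ?thesis .
qed

lemma poly_apply_invariant:
  assumes "vec.subspace W" "\<forall>x\<in>W. M *v x \<in> W" "w \<in> W"
  shows "poly_apply p M w \<in> W"
proof -
  have "(((*v) M) ^^ i) w \<in> W" for i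
    using assms(2,3) by (induction i) auto
  then show ?thesis
    unfolding poly_apply_def by (intro vec.subspace_sum[OF assms(1)] vec.subspace_scale[OF assms(1)])
qed

text \<open>If a nonzero polynomial annihilates a nonzero vector of an invariant subspace, then
  splitting off a linear factor (over C) produces an eigenvector in that subspace.\<close>
lemma eigenvector_from_annihilator:
  assumes W: "vec.subspace W" "\<forall>x\<in>W. M *v x \<in> W" "w \<in> W" "w \<noteq> 0"
  shows "p \<noteq> 0 \<Longrightarrow> poly_apply p M w = 0 \<Longrightarrow> \<exists>l u. u \<in> W \<and> u \<noteq> 0 \<and> M *v u = l *s u"
proof (induction "degree p" arbitrary: p rule: less_induct)
  case less
  show ?case
  proof (cases "degree p = 0")
    case True
    then obtain a where "p = [:a:]" by (metis degree_eq_zeroE)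
    with less.prems have "a \<noteq> 0" "a *s w = 0" by (auto simp: poly_apply_def)
    with W(4) show ?thesis by (simp add: vec.scale_eq_0_iff)
  next
    case False
    then obtain z where "poly p z = 0"
      using fundamental_theorem_of_algebra[of p] constant_degree[of p] by auto
    then obtain r where r: "p = [:-z, 1:] * r" by (metis poly_eq_0_iff_dvd dvdE)
    with less.prems have r0: "r \<noteq> 0" by auto
    have "degree p = degree [:-z, 1:] + degree r"
      unfolding r by (rule degree_mult_eq) (use r0 in auto)
    then have deg: "degree r < degree p" by simp
    show ?thesis
    proof (cases "poly_apply r M w = 0")
      case True
      from less.hyps[OF deg r0 True] show ?thesis .
    next
      case False
      have "M *v poly_apply r M w = z *s poly_apply r M w"
        using less.prems(2) unfolding r poly_apply_linear_factor by simp
      with False poly_apply_invariant[OF W(1-3)] show ?thesis by blast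
    qed
  qed
qed

text \<open>Every nonzero invariant subspace contains an eigenvector: the n+1 vectors
  w, M w, ..., M^n w are linearly dependent, giving an annihilating polynomial.\<close>
lemma eigenvector_exists:
  fixes M :: "complex^'k^'k"
  assumes W: "vec.subspace W" "\<forall>x\<in>W. M *v x \<in> W" "w \<in> W" "w \<noteq> 0"
  shows "\<exists>l u. u \<in> W \<and> u \<noteq> 0 \<and> M *v u = l *s u"
proof -
  let ?X = "\<lambda>i. (((*v) M) ^^ i) w"
  let ?N = "CARD('k)"
  have "\<exists>c. (\<exists>j\<le>?N. c j \<noteq> 0) \<and> (\<Sum>i\<le>?N. c i *s ?X i) = 0"
  proof (cases "inj_on ?X {..?N}")
    case False
    then obtain i j where ij: "i \<le> ?N" "j \<le> ?N" "i < j" "?X i = ?X j"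
      unfolding inj_on_def by (metis atMost_iff linorder_neqE_nat)
    let ?c = "\<lambda>l. (if l = j then 1 else 0) - (if l = i then 1 else (0::complex))"
    have "(\<Sum>l\<le>?N. ?c l *s ?X l)
        = (\<Sum>l\<le>?N. (if l = j then ?X l else 0)) - (\<Sum>l\<le>?N. (if l = i then ?X l else 0))"
      by (simp add: vector_sub_rdistrib sum_subtractf if_distrib[of "\<lambda>a. a *s _"] cong: if_cong)
    also have "\<dots> = 0" using ij by simp
    finally show ?thesis using ij by (intro exI[of _ ?c]) auto
  next
    case True
    let ?S = "?X ` {..?N}"
    have "vec.dim ?S \<le> ?N"
      using vec.dim_subset[of ?S UNIV] by (simp add: card_cart_basis)
    moreover have "card ?S = Suc ?N" using True by (simp add: card_image)
    ultimately have "vec.dependent ?S"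
      by (intro vec.dependent_biggerset_general) simp
    then obtain u where u: "\<exists>v\<in>?S. u v \<noteq> 0" "(\<Sum>v\<in>?S. u v *s v) = 0"
      using vec.dependent_finite[of ?S] by auto
    have "(\<Sum>i\<le>?N. u (?X i) *s ?X i) = (\<Sum>v\<in>?S. u v *s v)"
      using sum.reindex[OF True, of "\<lambda>v. u v *s v"] by simp
    with u show ?thesis by (intro exI[of _ "\<lambda>i. u (?X i)"]) auto
  qed
  then obtain c j where c: "j \<le> ?N" "c j \<noteq> 0" "(\<Sum>i\<le>?N. c i *s ?X i) = 0" by blast
  let ?p = "\<Sum>i\<le>?N. monom (c i) i"
  have "degree ?p \<le> ?N"
    by (rule degree_sum_le) (auto intro: order_trans[OF degree_monom_le])
  moreover have coeff_p: "coeff ?p l = (if l \<le> ?N then c l else 0)" for l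
    by (simp add: coeff_sum coeff_monom)
  ultimately have "poly_apply ?p M w = 0"
    using c(3) by (simp add: poly_apply_upto)
  moreover have "?p \<noteq> 0"
    using coeff_p[of j] c(1,2) by auto
  ultimately show ?thesis by (intro eigenvector_from_annihilator[OF W])
qed

definition joint_eigenvector :: "(complex^'k^'k) set \<Rightarrow> complex^'k \<Rightarrow> bool" where
  "joint_eigenvector F v \<longleftrightarrow> (\<forall>M\<in>F. \<exists>l. M *v v = l *s v)"

lemma subspace_dim_less:
  assumes "vec.subspace V" "vec.subspace W" "V \<subseteq> W" "V \<noteq> W"
  shows "vec.dim V < vec.dim W"
proof (rule vec.dim_psubset)
  show "vec.span V \<subset> vec.span W"
    using assms vec.span_eq_iff[of V] vec.span_eq_iff[of W] by blast
qed

text \<open>A commuting family of matrices leaving a nonzero subspace W invariant has a common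
  eigenvector in W: either every member acts on W as a scalar, or some member has a proper
  eigenspace in W, which is again invariant under the family and of smaller dimension.\<close>
lemma common_eigenvector:
  fixes F :: "(complex^'k^'k) set"
  assumes comm: "\<forall>M\<in>F. \<forall>N\<in>F. M ** N = N ** M"
  shows "vec.subspace W \<Longrightarrow> \<forall>M\<in>F. \<forall>x\<in>W. M *v x \<in> W \<Longrightarrow> W \<noteq> {0} \<Longrightarrow>
     \<exists>v\<in>W. v \<noteq> 0 \<and> joint_eigenvector F v"
proof (induction "vec.dim W" arbitrary: W rule: less_induct)
  case less
  obtain w where w: "w \<in> W" "w \<noteq> 0"
    using less.prems(3) vec.subspace_0[OF less.prems(1)] by blast
  show ?case
  proof (cases "\<forall>M\<in>F. \<exists>l. \<forall>x\<in>W. M *v x = l *s x")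
    case True
    then show ?thesis using w unfolding joint_eigenvector_def by blast
  next
    case False
    then obtain M where M: "M \<in> F" "\<forall>l. \<exists>x\<in>W. M *v x \<noteq> l *s x" by blast
    obtain l u where u: "u \<in> W" "u \<noteq> 0" "M *v u = l *s u"
      using eigenvector_exists[OF less.prems(1) _ w] less.prems(2) M(1) by blast
    define W' where "W' = {x\<in>W. M *v x = l *s x}"
    have sub: "vec.subspace W'"
      using less.prems(1)
      by (auto simp: W'_def vec.subspace_def vec.add vec.scale vector_add_ldistrib mult.commute)
    have "W' \<noteq> W" using M(2) unfolding W'_def by blast
    then have dim: "vec.dim W' < vec.dim W"
      by (intro subspace_dim_less[OF sub less.prems(1)]) (auto simp: W'_def)
    have inv: "\<forall>N\<in>F. \<forall>x\<in>W'. N *v x \<in> W'"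
    proof (intro ballI)
      fix N x assume N: "N \<in> F" and x: "x \<in> W'"
      have "M *v (N *v x) = N *v (M *v x)"
        by (simp add: matrix_vector_mul_assoc comm N M(1))
      also have "\<dots> = l *s (N *v x)" using x by (simp add: W'_def vec.scale)
      finally show "N *v x \<in> W'" using x less.prems(2) N by (auto simp: W'_def)
    qed
    have "W' \<noteq> {0}" using u by (auto simp: W'_def)
    from less.hyps[OF dim sub inv this] show ?thesis by (auto simp: W'_def)
  qed
qed

definition cinner :: "complex^'k \<Rightarrow> complex^'k \<Rightarrow> complex" where
  "cinner u w = (\<Sum>i\<in>UNIV. u$i * cnj (w$i))"

definition orthonormal :: "(complex^'k) set \<Rightarrow> bool" where
  "orthonormal E \<longleftrightarrow> finite E \<and> (\<forall>e\<in>E. cinner e e = 1) \<and>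
     (\<forall>e\<in>E. \<forall>e'\<in>E. e \<noteq> e' \<longrightarrow> cinner e e' = 0)"

lemma cinner_add_left: "cinner (u + v) w = cinner u w + cinner v w"
  by (simp add: cinner_def distrib_right sum.distrib)

lemma cinner_diff_left: "cinner (u - v) w = cinner u w - cinner v w"
  by (simp add: cinner_def left_diff_distrib sum_subtractf)

lemma cinner_scale_left: "cinner (c *s u) w = c * cinner u w"
  by (simp add: cinner_def sum_distrib_left mult.assoc)

lemma cinner_scale_right: "cinner u (c *s w) = cnj c * cinner u w"
  by (simp add: cinner_def sum_distrib_left algebra_simps)

lemma cinner_commute: "cinner w u = cnj (cinner u w)"
  by (simp add: cinner_def mult.commute)

lemma cinner_zero_left [simp]: "cinner 0 w = 0"
  by (simp add: cinner_def)

lemma cinner_sum_left: "finite E \<Longrightarrow> cinner (\<Sum>e\<in>E. f e) w = (\<Sum>e\<in>E. cinner (f e) w)"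
  by (induction E rule: finite_induct) (auto simp: cinner_add_left)

lemma cinner_self: "cinner u u = of_real (\<Sum>i\<in>UNIV. (cmod (u$i))\<^sup>2)"
proof -
  have "of_real ((cmod (u$i))\<^sup>2) = u$i * cnj (u$i)" for i by (rule complex_norm_square)
  then show ?thesis unfolding cinner_def of_real_sum by simp
qed

lemma cinner_self_pos:
  assumes "u \<noteq> 0"
  shows "(\<Sum>i\<in>UNIV. (cmod (u$i))\<^sup>2) > 0"
proof -
  obtain i where "u$i \<noteq> 0" using assms vec_eq_iff[of u 0] by auto
  then have "(cmod (u$i))\<^sup>2 > 0" by simp
  also have "(cmod (u$i))\<^sup>2 \<le> (\<Sum>i\<in>UNIV. (cmod (u$i))\<^sup>2)"
    by (rule member_le_sum) auto
  finally show ?thesis .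
qed

lemma cinner_adjoint: "cinner (M *v u) w = cinner u (conj_transpose M *v w)"
proof -
  have "cinner (M *v u) w = (\<Sum>i\<in>UNIV. \<Sum>j\<in>UNIV. M$i$j * u$j * cnj (w$i))"
    by (simp add: cinner_def matrix_vector_mult_def sum_distrib_right)
  also have "\<dots> = (\<Sum>j\<in>UNIV. \<Sum>i\<in>UNIV. M$i$j * u$j * cnj (w$i))" by (rule sum.swap)
  also have "\<dots> = cinner u (conj_transpose M *v w)"
    by (simp add: cinner_def matrix_vector_mult_def conj_transpose_def sum_distrib_left mult_ac)
  finally show ?thesis .
qed

lemma normalize_vector:
  assumes "v \<noteq> 0"
  obtains c where "cinner (c *s v) (c *s v) = 1"
proof -
  define s where "s = (\<Sum>i\<in>UNIV. (cmod (v$i))\<^sup>2)"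
  have s: "s > 0" using cinner_self_pos[OF assms] by (simp add: s_def)
  let ?c = "complex_of_real (1 / sqrt s)"
  have "cinner v v = of_real s" by (simp add: cinner_self s_def)
  then have "cinner (?c *s v) (?c *s v) = cnj ?c * (?c * of_real s)"
    by (simp only: cinner_scale_left cinner_scale_right)
  also have "\<dots> = of_real (1 / sqrt s * (1 / sqrt s) * s)"
    by (simp only: complex_cnj_complex_of_real of_real_mult mult.assoc)
  also have "1 / sqrt s * (1 / sqrt s) * s = 1"
    using s by (simp add: divide_simps)
  finally show ?thesis by (intro that) simp
qed

text \<open>Normalise a common eigenvector e; its
  orthogonal complement in W is invariant because the adjoints also have e as eigenvector.\<close>
lemma orthonormal_joint_eigenbasis:
  fixes F :: "(complex^'k^'k) set"
  assumes comm: "\<forall>M\<in>F. \<forall>N\<in>F. M ** N = N ** M"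
    and adj: "\<forall>M\<in>F. conj_transpose M \<in> F"
  shows "vec.subspace W \<Longrightarrow> \<forall>M\<in>F. \<forall>x\<in>W. M *v x \<in> W \<Longrightarrow>
     \<exists>E. orthonormal E \<and> E \<subseteq> W \<and> (\<forall>e\<in>E. joint_eigenvector F e) \<and> W \<subseteq> vec.span E"
proof (induction "vec.dim W" arbitrary: W rule: less_induct)
  case less
  show ?case
  proof (cases "W = {0}")
    case True
    then show ?thesis by (intro exI[of _ "{}"]) (auto simp: orthonormal_def)
  next
    case False
    obtain v where v: "v \<in> W" "v \<noteq> 0" "joint_eigenvector F v"
      using common_eigenvector[OF comm less.prems(1,2) False] by blast
    obtain c where unit_e: "cinner (c *s v) (c *s v) = 1" using normalize_vector[OF v(2)] .
    define e where "e = c *s v"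
    have eW: "e \<in> W" unfolding e_def by (rule vec.subspace_scale[OF less.prems(1) v(1)])
    have ee: "cinner e e = 1" using unit_e by (simp add: e_def)
    have je: "joint_eigenvector F e"
      using v(3) unfolding joint_eigenvector_def e_def
      by (metis vec.scale vector_smult_assoc mult.commute)
    define W' where "W' = {x\<in>W. cinner x e = 0}"
    have sub: "vec.subspace W'"
      unfolding vec.subspace_def W'_def
      using vec.subspace_0[OF less.prems(1)] vec.subspace_add[OF less.prems(1)]
        vec.subspace_scale[OF less.prems(1)]
      by (simp add: cinner_add_left cinner_scale_left)
    have "e \<notin> W'" using ee by (simp add: W'_def)
    then have dim: "vec.dim W' < vec.dim W"
      using eW by (intro subspace_dim_less[OF sub less.prems(1)]) (auto simp: W'_def)
    have inv: "\<forall>M\<in>F. \<forall>x\<in>W'. M *v x \<in> W'"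
    proof (intro ballI)
      fix M x assume M: "M \<in> F" and x: "x \<in> W'"
      obtain l where l: "conj_transpose M *v e = l *s e"
        using je adj M unfolding joint_eigenvector_def by blast
      have "cinner (M *v x) e = 0" using x by (simp add: cinner_adjoint l cinner_scale_right W'_def)
      then show "M *v x \<in> W'" using x less.prems(2) M by (auto simp: W'_def)
    qed
    obtain E where E: "orthonormal E" "E \<subseteq> W'" "\<forall>e\<in>E. joint_eigenvector F e" "W' \<subseteq> vec.span E"
      using less.hyps[OF dim sub inv] by blast
    have orth: "\<forall>e'\<in>E. cinner e' e = 0 \<and> cinner e e' = 0"
      using E(2) cinner_commute[of e] by (auto simp: W'_def)
    have span: "W \<subseteq> vec.span (insert e E)"
    proof
      fix x assume x: "x \<in> W"
      have "x - cinner x e *s e \<in> W'"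
        using x eW less.prems(1) ee
        by (simp add: W'_def cinner_diff_left cinner_scale_left vec.subspace_diff vec.subspace_scale)
      then have "x - cinner x e *s e \<in> vec.span (insert e E)"
        using E(4) vec.span_mono[of E "insert e E"] by auto
      moreover have "cinner x e *s e \<in> vec.span (insert e E)"
        by (simp add: vec.span_base vec.span_scale)
      ultimately have "(x - cinner x e *s e) + cinner x e *s e \<in> vec.span (insert e E)"
        by (rule vec.span_add)
      then show "x \<in> vec.span (insert e E)" by simp
    qed
    have "orthonormal (insert e E)"
      using E(1) ee orth unfolding orthonormal_def by blast
    moreover have "insert e E \<subseteq> W" using E(2) eW by (auto simp: W'_def)
    ultimately show ?thesis using E(3) je span by blast
  qed
qed

lemma orthonormal_expansion:
  assumes E: "orthonormal E" "UNIV \<subseteq> vec.span E"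
  shows "x = (\<Sum>e\<in>E. cinner x e *s e)"
proof -
  have fin: "finite E" using E(1) by (simp add: orthonormal_def)
  obtain u where u: "x = (\<Sum>v\<in>E. u v *s v)"
    using E(2) vec.span_finite[OF fin] by blast
  have "cinner x e' = u e'" if e': "e' \<in> E" for e'
  proof -
    have "cinner x e' = (\<Sum>v\<in>E. u v * cinner v e')"
      unfolding u by (simp add: cinner_sum_left fin cinner_scale_left)
    also have "\<dots> = (\<Sum>v\<in>E. if v = e' then u v else 0)"
      by (rule sum.cong) (use E(1) e' in \<open>auto simp: orthonormal_def\<close>)
    also have "\<dots> = u e'" using fin e' by simp
    finally show ?thesis .
  qed
  then show ?thesis using u by (metis (no_types, lifting) sum.cong)
qed

lemma orthonormal_basis_delta:
  fixes E :: "(complex^'k) set" and i j :: 'k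
  assumes E: "orthonormal E" "UNIV \<subseteq> vec.span E"
  shows "(\<Sum>e\<in>E. e$j * cnj (e$i)) = (if i = j then 1 else 0)"
proof -
  have ax: "cinner (axis j 1) e = cnj (e$j)" for e :: "complex^'k"
    unfolding cinner_def axis_def by (simp add: if_distrib[of "\<lambda>a. a * _"] cong: if_cong)
  have "axis j (1::complex) = (\<Sum>e\<in>E. cinner (axis j 1) e *s e)"
    by (rule orthonormal_expansion[OF E])
  then have "(axis j (1::complex))$i = (\<Sum>e\<in>E. cnj (e$j) * e$i)"
    by (metis (no_types, lifting) ax sum.cong sum_component vector_smult_component)
  then have "cnj ((axis j (1::complex))$i) = (\<Sum>e\<in>E. e$j * cnj (e$i))"
    by (simp add: mult.commute)
  then show ?thesis by (auto simp: axis_def)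
qed

lemma trace_orthonormal_basis:
  assumes E: "orthonormal E" "UNIV \<subseteq> vec.span E"
  shows "trace M = (\<Sum>e\<in>E. cinner (M *v e) e)"
proof -
  have "(\<Sum>e\<in>E. cinner (M *v e) e) = (\<Sum>e\<in>E. \<Sum>i\<in>UNIV. \<Sum>j\<in>UNIV. M$i$j * (e$j * cnj (e$i)))"
    by (simp add: cinner_def matrix_vector_mult_def sum_distrib_right mult.assoc)
  also have "\<dots> = (\<Sum>i\<in>UNIV. \<Sum>j\<in>UNIV. \<Sum>e\<in>E. M$i$j * (e$j * cnj (e$i)))"
    by (simp add: sum.swap[of _ E])
  also have "\<dots> = (\<Sum>i\<in>UNIV. \<Sum>j\<in>UNIV. M$i$j * (if i = j then 1 else 0))"
    by (simp add: sum_distrib_left[symmetric] orthonormal_basis_delta[OF E])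
  also have "\<dots> = trace M" by (simp add: trace_def if_distrib[of "\<lambda>a. _ * a"] cong: if_cong)
  finally show ?thesis ..
qed

text \<open>A unitary matrix whose trace equals the dimension is the identity, since
  the squared Frobenius distance to the identity is 2 n - 2 Re (trace U).\<close>
lemma unitary_trace_eq_dim:
  fixes U :: "complex^'k^'k"
  assumes u: "unitary_mat U" and tr: "trace U = of_nat CARD('k)"
  shows "U = mat 1"
proof -
  let ?D = "\<lambda>i j. U$i$j - (mat 1 :: complex^'k^'k)$i$j"
  have row: "(\<Sum>j\<in>UNIV. U$i$j * cnj (U$i$j)) = 1" for i
  proof -
    have "(U ** conj_transpose U)$i$i = 1" using u by (simp add: unitary_mat_def mat_def)
    then show ?thesis by (simp add: matrix_matrix_mult_def conj_transpose_def)
  qed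
  have entry: "?D i j * cnj (?D i j) = U$i$j * cnj (U$i$j)
      - (if i = j then U$i$j + cnj (U$i$j) - 1 else 0)" for i j
    by (simp add: mat_def algebra_simps)
  have "(\<Sum>i\<in>UNIV. \<Sum>j\<in>UNIV. ?D i j * cnj (?D i j))
      = (\<Sum>i\<in>UNIV. (\<Sum>j\<in>UNIV. U$i$j * cnj (U$i$j)) - (U$i$i + cnj (U$i$i) - 1))"
    unfolding entry by (simp add: sum_subtractf)
  also have "\<dots> = of_nat CARD('k) - (trace U + cnj (trace U) - of_nat CARD('k))"
    by (simp add: row sum_subtractf sum.distrib trace_def cnj_sum sum_negf)
  also have "\<dots> = 0" by (simp add: tr)
  finally have sum0: "(\<Sum>i\<in>UNIV. \<Sum>j\<in>UNIV. ?D i j * cnj (?D i j)) = 0" .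
  have "?D i j * cnj (?D i j) = of_real ((cmod (?D i j))\<^sup>2)" for i j
    by (rule complex_norm_square[symmetric])
  then have "of_real (\<Sum>i\<in>UNIV. \<Sum>j\<in>UNIV. (cmod (?D i j))\<^sup>2) = (0::complex)"
    using sum0 by (simp add: of_real_sum)
  then have "(\<Sum>i\<in>UNIV. \<Sum>j\<in>UNIV. (cmod (?D i j))\<^sup>2) = 0"
    by (rule of_real_eq_0_iff[THEN iffD1])
  then have "(cmod (?D i j))\<^sup>2 = 0" for i j
    by (simp add: sum_nonneg_eq_0_iff sum_nonneg)
  then show ?thesis by (simp add: vec_eq_iff)
qed

definition add_subgroup :: "'a::ab_group_add set \<Rightarrow> bool" where
  "add_subgroup G \<longleftrightarrow> 0 \<in> G \<and> (\<forall>x\<in>G. \<forall>y\<in>G. x + y \<in> G) \<and> (\<forall>x\<in>G. - x \<in> G)"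

text \<open>Characters of an additive group G, extended by zero outside G, so that two characters
  of G are equal as functions iff they agree on G.\<close>
definition character :: "'a::ab_group_add set \<Rightarrow> ('a \<Rightarrow> complex) \<Rightarrow> bool" where
  "character G ch \<longleftrightarrow> (\<forall>t\<in>G. \<forall>u\<in>G. ch (t + u) = ch t * ch u) \<and> ch 0 = 1 \<and> (\<forall>t. t \<notin> G \<longrightarrow> ch t = 0)"

lemma character_nonzero:
  assumes G: "add_subgroup G" and ch: "character G ch" and t: "t \<in> G"
  shows "ch t \<noteq> 0"
proof
  assume "ch t = 0"
  moreover have "ch (t + - t) = ch t * ch (- t)"
    using G ch t unfolding add_subgroup_def character_def by blast
  ultimately show False using ch by (simp add: character_def)
qed

lemma character_cancel:
  assumes G: "add_subgroup G" and ch: "character G ch" and "v \<in> G" "d \<in> G" "u \<in> G"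
    and eq: "ch (v + d + u) = ch (v + u)"
  shows "ch d = 1"
proof -
  have vu: "v + u \<in> G" using G assms(3,5) by (simp add: add_subgroup_def)
  have "ch (v + d + u) = ch d * ch (v + u)"
    using ch vu assms(4) unfolding character_def by (metis add.commute add.left_commute)
  with eq character_nonzero[OF G ch vu] show ?thesis by simp
qed

lemma characters_independent:
  assumes G: "add_subgroup G"
  shows "finite Y \<Longrightarrow> \<forall>ch\<in>Y. character G ch \<Longrightarrow> \<forall>t\<in>G. (\<Sum>ch\<in>Y. c ch * ch t) = 0 \<Longrightarrow>
    \<forall>ch\<in>Y. c ch = 0"
proof (induction Y arbitrary: c rule: finite_induct)
  case empty
  then show ?case by simp
next
  case (insert ps Y)
  have chY: "\<forall>ch\<in>Y. character G ch" and chp: "character G ps" using insert.prems(1) by auto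
  have G0: "0 \<in> G" and Gadd: "\<And>t s. t \<in> G \<Longrightarrow> s \<in> G \<Longrightarrow> t + s \<in> G"
    using G by (auto simp: add_subgroup_def)
  have rel: "(\<Sum>ch\<in>Y. c ch * ch t) = - (c ps * ps t)" if "t \<in> G" for t
    using insert.prems(2) that insert.hyps by (simp add: eq_neg_iff_add_eq_0 add.commute)
  (* Subtracting ps s times the relation at t from the relation at t + s eliminates ps. *)
  have shifted: "c ch * (ch s - ps s) = 0" if "ch \<in> Y" "s \<in> G" for ch s
  proof -
    have "\<forall>t\<in>G. (\<Sum>ch\<in>Y. (c ch * (ch s - ps s)) * ch t) = 0"
    proof
      fix t assume t: "t \<in> G"
      have "(\<Sum>ch\<in>Y. c ch * ch (t + s)) = (\<Sum>ch\<in>Y. c ch * (ch t * ch s))"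
        using chY t \<open>s \<in> G\<close> by (intro sum.cong refl) (simp add: character_def)
      then have "(\<Sum>ch\<in>Y. (c ch * (ch s - ps s)) * ch t)
          = (\<Sum>ch\<in>Y. c ch * ch (t + s)) - ps s * (\<Sum>ch\<in>Y. c ch * ch t)"
        by (simp add: sum_distrib_left sum_subtractf algebra_simps)
      also have "\<dots> = - (c ps * ps (t + s)) + ps s * (c ps * ps t)"
        using rel[OF Gadd[OF t \<open>s \<in> G\<close>]] rel[OF t] by simp
      also have "\<dots> = 0" using chp t \<open>s \<in> G\<close> by (simp add: character_def)
      finally show "(\<Sum>ch\<in>Y. (c ch * (ch s - ps s)) * ch t) = 0" .
    qed
    from insert.IH[OF chY this] that show ?thesis by blast
  qed
  have cY: "c ch = 0" if "ch \<in> Y" for ch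
  proof -
    have "ch \<noteq> ps" using that insert.hyps(2) by blast
    then obtain s where s: "ch s \<noteq> ps s" by blast
    then have "s \<in> G" using chY that chp unfolding character_def by metis
    then show ?thesis using shifted[OF that \<open>s \<in> G\<close>] s by simp
  qed
  then have "c ps = 0" using rel[OF G0] chp by (simp add: character_def)
  with cY show ?case by blast
qed

lemma sum_by_fibres:
  assumes "finite E" "finite Y" "f ` E \<subseteq> Y"
  shows "(\<Sum>e\<in>E. f e t) = (\<Sum>ph\<in>Y. of_nat (card {e\<in>E. f e = ph}) * ph t)"
proof -
  have "(\<Sum>e\<in>E. f e t) = (\<Sum>ph\<in>f ` E. \<Sum>e\<in>{e\<in>E. f e = ph}. f e t)"
    by (rule sum.image_gen[OF assms(1)])
  also have "\<dots> = (\<Sum>ph\<in>f ` E. of_nat (card {e\<in>E. f e = ph}) * ph t)"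
    by (intro sum.cong refl) simp
  also have "\<dots> = (\<Sum>ph\<in>Y. of_nat (card {e\<in>E. f e = ph}) * ph t)"
  proof (rule sum.mono_neutral_left[OF assms(2,3)], rule ballI)
    fix ph assume "ph \<in> Y - f ` E"
    then have "{e\<in>E. f e = ph} = {}" by blast
    then show "of_nat (card {e\<in>E. f e = ph}) * ph t = 0" by (metis card.empty mult_zero_left of_nat_0)
  qed
  finally show ?thesis .
qed

text \<open>A finite family of characters is determined, with multiplicities, by its sum.  In
  particular, if transforming every member by h preserves the sum, h maps the family into
  itself: otherwise the character h (ch e0) would occur with nonzero coefficient in a
  vanishing combination of characters.\<close>
lemma character_sum_determines:
  fixes ch :: "'e \<Rightarrow> 'a::ab_group_add \<Rightarrow> complex"
  assumes G: "add_subgroup G" and fin: "finite E"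
    and chars: "\<forall>e\<in>E. character G (ch e)" "\<forall>e\<in>E. character G (h (ch e))"
    and eq: "\<forall>t\<in>G. (\<Sum>e\<in>E. h (ch e) t) = (\<Sum>e\<in>E. ch e t)"
    and e0: "e0 \<in> E"
  shows "h (ch e0) \<in> ch ` E"
proof (rule ccontr)
  assume notin: "h (ch e0) \<notin> ch ` E"
  let ?Y = "ch ` E \<union> (\<lambda>e. h (ch e)) ` E"
  let ?c = "\<lambda>ph. of_nat (card {e\<in>E. ch e = ph}) - of_nat (card {e\<in>E. h (ch e) = ph}) :: complex"
  have fY: "finite ?Y" using fin by simp
  have "\<forall>t\<in>G. (\<Sum>ph\<in>?Y. ?c ph * ph t) = 0"
  proof
    fix t assume t: "t \<in> G"
    have "(\<Sum>ph\<in>?Y. ?c ph * ph t) = (\<Sum>e\<in>E. ch e t) - (\<Sum>e\<in>E. h (ch e) t)"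
      using sum_by_fibres[OF fin fY, of ch t] sum_by_fibres[OF fin fY, of "\<lambda>e. h (ch e)" t]
      by (simp add: left_diff_distrib sum_subtractf)
    then show "(\<Sum>ph\<in>?Y. ?c ph * ph t) = 0" using eq t by simp
  qed
  moreover have "\<forall>ph\<in>?Y. character G ph" using chars by blast
  ultimately have "\<forall>ph\<in>?Y. ?c ph = 0"
    by (rule characters_independent[OF G fY, rotated])
  then have "?c (h (ch e0)) = 0" using e0 by blast
  moreover have "{e\<in>E. ch e = h (ch e0)} = {}" using notin by (auto simp: image_iff)
  moreover have "card {e\<in>E. h (ch e) = h (ch e0)} > 0" using e0 fin by (auto simp: card_gt_0_iff)
  ultimately show False by simp
qed

definition unitary_rep :: "'a::ab_group_add set \<Rightarrow> ('a \<Rightarrow> complex^'k^'k) \<Rightarrow> bool" where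
  "unitary_rep G \<mu> \<longleftrightarrow> (\<forall>t\<in>G. unitary_mat (\<mu> t)) \<and> (\<forall>t\<in>G. \<forall>u\<in>G. \<mu> (t + u) = \<mu> t ** \<mu> u)"

text \<open>The neutral element acts as the identity, since mu 0 is an invertible idempotent.\<close>
lemma unitary_rep_zero:
  assumes G: "add_subgroup G" and \<mu>: "unitary_rep G \<mu>"
  shows "\<mu> 0 = mat 1"
proof -
  have G0: "0 \<in> G" using G by (simp add: add_subgroup_def)
  have "\<mu> 0 = \<mu> 0 ** \<mu> 0" using \<mu> G0 unfolding unitary_rep_def by (metis add_0)
  then have "conj_transpose (\<mu> 0) ** \<mu> 0 = conj_transpose (\<mu> 0) ** (\<mu> 0 ** \<mu> 0)" by simp
  then show ?thesis using \<mu> G0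
    by (simp add: unitary_rep_def unitary_mat_def matrix_mul_assoc matrix_mul_lid)
qed

lemma unitary_rep_adjoint:
  assumes G: "add_subgroup G" and \<mu>: "unitary_rep G \<mu>" and t: "t \<in> G"
  shows "conj_transpose (\<mu> t) = \<mu> (- t)"
proof -
  have "\<mu> t ** \<mu> (- t) = mat 1"
    using \<mu> G t unitary_rep_zero[OF G \<mu>] unfolding unitary_rep_def add_subgroup_def
    by (metis add.right_inverse)
  then have "conj_transpose (\<mu> t) ** (\<mu> t ** \<mu> (- t)) = conj_transpose (\<mu> t)"
    by (simp add: matrix_mul_rid)
  then show ?thesis using \<mu> t
    by (simp add: unitary_rep_def unitary_mat_def matrix_mul_assoc matrix_mul_lid)
qed

text \<open>A unitary representation of an abelian group is a direct sum of characters: the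
  matrices mu t commute and are closed under adjoints, so they have an orthonormal joint
  eigenbasis E, and the eigenvalue of mu t at e in E is a character of G.\<close>
lemma unitary_rep_characters:
  fixes \<mu> :: "'a::ab_group_add \<Rightarrow> complex^'k^'k"
  assumes G: "add_subgroup G" and \<mu>: "unitary_rep G \<mu>"
  obtains E :: "(complex^'k) set" and ch
  where "finite E" "\<forall>e\<in>E. character G (ch e)" "\<forall>t\<in>G. trace (\<mu> t) = (\<Sum>e\<in>E. ch e t)"
proof -
  have hom: "\<And>t u. t \<in> G \<Longrightarrow> u \<in> G \<Longrightarrow> \<mu> (t + u) = \<mu> t ** \<mu> u"
    using \<mu> by (simp add: unitary_rep_def)
  have Gadd: "\<And>t u. t \<in> G \<Longrightarrow> u \<in> G \<Longrightarrow> t + u \<in> G" and G0: "0 \<in> G" and Gneg: "\<And>t. t \<in> G \<Longrightarrow> - t \<in> G"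
    using G by (auto simp: add_subgroup_def)
  have comm: "\<forall>M\<in>\<mu> ` G. \<forall>N\<in>\<mu> ` G. M ** N = N ** M"
    using hom by (auto simp: add.commute[of _ "_ :: 'a"] hom[symmetric])
  have adj: "\<forall>M\<in>\<mu> ` G. conj_transpose M \<in> \<mu> ` G"
    using unitary_rep_adjoint[OF G \<mu>] Gneg by auto
  obtain E where E: "orthonormal E" "\<forall>e\<in>E. joint_eigenvector (\<mu> ` G) e" "UNIV \<subseteq> vec.span E"
    using orthonormal_joint_eigenbasis[OF comm adj vec.subspace_UNIV] by blast
  define ch where "ch e = (\<lambda>t. if t \<in> G then cinner (\<mu> t *v e) e else 0)" for e
  have unit: "cinner e e = 1" if "e \<in> E" for e using E(1) that by (simp add: orthonormal_def)
  have eig: "\<mu> t *v e = ch e t *s e" if e: "e \<in> E" and t: "t \<in> G" for e t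
  proof -
    obtain l where l: "\<mu> t *v e = l *s e"
      using E(2) e t unfolding joint_eigenvector_def by blast
    then have "ch e t = l" using t unit[OF e] by (simp add: ch_def cinner_scale_left)
    then show ?thesis using l by simp
  qed
  have "character G (ch e)" if e: "e \<in> E" for e
    unfolding character_def
  proof (intro conjI ballI allI impI)
    fix t u assume t: "t \<in> G" and u: "u \<in> G"
    have "\<mu> (t + u) *v e = \<mu> t *v (\<mu> u *v e)" using hom[OF t u] by (simp add: matrix_vector_mul_assoc)
    also have "\<dots> = (ch e t * ch e u) *s e" using eig[OF e t] eig[OF e u] by (simp add: vec.scale mult.commute)
    finally show "ch e (t + u) = ch e t * ch e u"
      using Gadd[OF t u] unit[OF e] by (simp add: ch_def cinner_scale_left)
  next
    show "ch e 0 = 1" using G0 unit[OF e] by (simp add: ch_def unitary_rep_zero[OF G \<mu>])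
  qed (simp add: ch_def)
  moreover have "trace (\<mu> t) = (\<Sum>e\<in>E. ch e t)" if "t \<in> G" for t
    using trace_orthonormal_basis[OF E(1,3), of "\<mu> t"] that by (simp add: ch_def)
  ultimately show ?thesis using E(1) that[of E ch] by (auto simp: orthonormal_def)
qed

text \<open>An element on which all constituent characters are trivial acts trivially,
  because the trace of mu t then equals the dimension.\<close>
lemma unitary_rep_trivial:
  fixes \<mu> :: "'a::ab_group_add \<Rightarrow> complex^'k^'k"
  assumes G: "add_subgroup G" and \<mu>: "unitary_rep G \<mu>"
    and E: "finite E" "\<forall>e\<in>E. character G (ch e)" "\<forall>t\<in>G. trace (\<mu> t) = (\<Sum>e\<in>E. ch e t)"
    and t: "t \<in> G" and triv: "\<forall>e\<in>E. ch e t = 1"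
  shows "\<mu> t = mat 1"
proof (rule unitary_trace_eq_dim)
  show "unitary_mat (\<mu> t)" using \<mu> t by (simp add: unitary_rep_def)
  have G0: "0 \<in> G" using G by (simp add: add_subgroup_def)
  have "trace (\<mu> t) = (\<Sum>e\<in>E. ch e 0)" using E(2,3) t triv by (simp add: character_def)
  also have "\<dots> = trace (\<mu> 0)" using E(3) G0 by simp
  finally show "trace (\<mu> t) = of_nat CARD('k)" by (simp add: unitary_rep_zero[OF G \<mu>] trace_I)
qed

lemma SL2_act_add: "SL2_act g (t + u) = SL2_act g t + SL2_act g u"
  by (cases g; cases t; cases u) (auto simp: algebra_simps)

lemma SL2_act_zero: "SL2_act g 0 = 0"
proof -
  obtain a b c d where "g = ((a, b), (c, d))" by (metis prod.exhaust)
  then show ?thesis by (simp add: zero_prod_def)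
qed

definition twist :: "(complex \<times> complex) set \<Rightarrow> (complex \<times> complex) \<times> (complex \<times> complex)
    \<Rightarrow> (complex \<times> complex \<Rightarrow> complex) \<Rightarrow> complex \<times> complex \<Rightarrow> complex" where
  "twist G g ch = (\<lambda>t. if t \<in> G then ch (SL2_act g t) else 0)"

locale complex_subring =
  fixes A :: "complex set"
  assumes of_nat_mem: "\<And>m. of_nat m \<in> A"
    and add_mem: "\<And>x y. x \<in> A \<Longrightarrow> y \<in> A \<Longrightarrow> x + y \<in> A"
    and mult_mem: "\<And>x y. x \<in> A \<Longrightarrow> y \<in> A \<Longrightarrow> x * y \<in> A"
    and uminus_mem: "\<And>x. x \<in> A \<Longrightarrow> - x \<in> A"
begin

lemma zero_mem: "0 \<in> A"
  using of_nat_mem[of 0] by simp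

lemma of_nat_mult_mem: "x \<in> A \<Longrightarrow> of_nat m * x \<in> A"
  by (simp add: mult_mem of_nat_mem)

lemma add_subgroup_pairs: "add_subgroup (A \<times> A)"
  by (auto simp: add_subgroup_def zero_prod_def zero_mem add_mem uminus_mem)

lemma SL2_act_mem: "g \<in> SL2 A \<Longrightarrow> t \<in> A \<times> A \<Longrightarrow> SL2_act g t \<in> A \<times> A"
  by (cases g; cases t) (auto simp: SL2_def intro!: add_mem mult_mem)

lemma twist_character:
  assumes ch: "character (A \<times> A) ch" and g: "g \<in> SL2 A"
  shows "character (A \<times> A) (twist (A \<times> A) g ch)"
  unfolding character_def
proof (intro conjI ballI allI impI)
  have ch_add: "\<And>t u. t \<in> A \<times> A \<Longrightarrow> u \<in> A \<times> A \<Longrightarrow> ch (t + u) = ch t * ch u"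
    using ch unfolding character_def by blast
  fix t u assume t: "t \<in> A \<times> A" and u: "u \<in> A \<times> A"
  have "t + u \<in> A \<times> A" using add_subgroup_pairs t u unfolding add_subgroup_def by blast
  then show "twist (A \<times> A) g ch (t + u) = twist (A \<times> A) g ch t * twist (A \<times> A) g ch u"
    using t u by (simp only: twist_def if_True SL2_act_add ch_add SL2_act_mem[OF g])
next
  show "twist (A \<times> A) g ch 0 = 1"
    using ch add_subgroup_pairs by (simp add: twist_def SL2_act_zero character_def add_subgroup_def)
qed (simp add: twist_def)

lemma twist_mem_family:
  assumes fin: "finite E" and chars: "\<forall>e\<in>E. character (A \<times> A) (ch e)"
    and inv: "\<forall>t\<in>A \<times> A. (\<Sum>e\<in>E. ch e (SL2_act g t)) = (\<Sum>e\<in>E. ch e t)"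
    and g: "g \<in> SL2 A" and e: "e \<in> E"
  shows "twist (A \<times> A) g (ch e) \<in> ch ` E"
proof (rule character_sum_determines[OF add_subgroup_pairs fin chars, of "twist (A \<times> A) g"])
  show "\<forall>e\<in>E. character (A \<times> A) (twist (A \<times> A) g (ch e))"
    using chars twist_character[OF _ g] by blast
  show "\<forall>t\<in>A \<times> A. (\<Sum>e\<in>E. twist (A \<times> A) g (ch e) t) = (\<Sum>e\<in>E. ch e t)"
    using inv by (simp add: twist_def)
qed (rule e)

lemma pigeonhole_nat:
  assumes "finite (range (f :: nat \<Rightarrow> 'a))"
  obtains a b where "a < b" "f a = f b"
proof -
  have "\<not> inj f" using assms finite_imageD infinite_UNIV_nat by blast
  then show ?thesis using that unfolding inj_def by (metis linorder_neqE_nat)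
qed

text \<open>Only finitely many of the twists of ch by the unipotent matrices ((1,m),(0,1)) differ,
  so ch (a y, y) = ch (b y, y) for some a < b, and cancellation gives ch ((b-a) y, 0) = 1.\<close>
lemma upper_unipotent_period:
  assumes ch: "character (A \<times> A) ch"
    and fin: "finite (range (\<lambda>m::nat. twist (A \<times> A) ((1, of_nat m), (0, 1)) ch))"
  obtains Q where "Q > 0" "\<forall>y\<in>A. ch (of_nat Q * y, 0) = 1"
proof -
  obtain a b :: nat where ab: "a < b"
    and eq: "twist (A \<times> A) ((1, of_nat a), (0, 1)) ch = twist (A \<times> A) ((1, of_nat b), (0, 1)) ch"
    using pigeonhole_nat[OF fin] by blast
  have "ch (of_nat (b - a) * y, 0) = 1" if y: "y \<in> A" for y
  proof (rule character_cancel[OF add_subgroup_pairs ch])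
    have "(0, y) \<in> A \<times> A" using y zero_mem by simp
    then have "ch (of_nat a * y, y) = ch (of_nat b * y, y)"
      using fun_cong[OF eq, of "(0, y)"] by (simp add: twist_def)
    moreover have "of_nat b * y = of_nat a * y + of_nat (b - a) * y"
      using ab by (simp add: of_nat_diff algebra_simps)
    ultimately show "ch ((of_nat a * y, 0) + (of_nat (b - a) * y, 0) + (0, y)) = ch ((of_nat a * y, 0) + (0, y))"
      by simp
  qed (use y zero_mem of_nat_mult_mem in auto)
  moreover have "b - a > 0" using ab by simp
  ultimately show ?thesis using that by blast
qed

lemma lower_unipotent_period:
  assumes ch: "character (A \<times> A) ch"
    and fin: "finite (range (\<lambda>m::nat. twist (A \<times> A) ((1, 0), (of_nat m, 1)) ch))"
  obtains Q where "Q > 0" "\<forall>y\<in>A. ch (0, of_nat Q * y) = 1"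
proof -
  obtain a b :: nat where ab: "a < b"
    and eq: "twist (A \<times> A) ((1, 0), (of_nat a, 1)) ch = twist (A \<times> A) ((1, 0), (of_nat b, 1)) ch"
    using pigeonhole_nat[OF fin] by blast
  have "ch (0, of_nat (b - a) * y) = 1" if y: "y \<in> A" for y
  proof (rule character_cancel[OF add_subgroup_pairs ch])
    have "(y, 0) \<in> A \<times> A" using y zero_mem by simp
    then have "ch (y, of_nat a * y) = ch (y, of_nat b * y)"
      using fun_cong[OF eq, of "(y, 0)"] by (simp add: twist_def)
    moreover have "of_nat b * y = of_nat a * y + of_nat (b - a) * y"
      using ab by (simp add: of_nat_diff algebra_simps)
    ultimately show "ch ((0, of_nat a * y) + (0, of_nat (b - a) * y) + (y, 0)) = ch ((0, of_nat a * y) + (y, 0))"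
      by simp
  qed (use y zero_mem of_nat_mult_mem in auto)
  moreover have "b - a > 0" using ab by simp
  ultimately show ?thesis using that by blast
qed

lemma finite_orbit_character_period:
  assumes ch: "character (A \<times> A) ch" and F: "finite F" "\<forall>g\<in>SL2 A. twist (A \<times> A) g ch \<in> F"
  obtains Q where "Q > 0" "\<forall>x\<in>A. \<forall>y\<in>A. ch (of_nat Q * x, of_nat Q * y) = 1"
proof -
  have SL2: "((1, of_nat m), (0, 1)) \<in> SL2 A" "((1, 0), (of_nat m, 1)) \<in> SL2 A" for m
    using of_nat_mem[of 1] of_nat_mem[of 0] of_nat_mem[of m] by (simp_all add: SL2_def)
  have "finite (range (\<lambda>m::nat. twist (A \<times> A) ((1, of_nat m), (0, 1)) ch))"
    by (rule finite_subset[OF _ F(1)]) (use F(2) SL2(1) in blast)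
  then obtain Q1 where Q1: "Q1 > 0" "\<forall>y\<in>A. ch (of_nat Q1 * y, 0) = 1"
    using upper_unipotent_period[OF ch] by blast
  have "finite (range (\<lambda>m::nat. twist (A \<times> A) ((1, 0), (of_nat m, 1)) ch))"
    by (rule finite_subset[OF _ F(1)]) (use F(2) SL2(2) in blast)
  then obtain Q2 where Q2: "Q2 > 0" "\<forall>y\<in>A. ch (0, of_nat Q2 * y) = 1"
    using lower_unipotent_period[OF ch] by blast
  have "ch (of_nat (Q1 * Q2) * x, of_nat (Q1 * Q2) * y) = 1" if "x \<in> A" "y \<in> A" for x y
  proof -
    have "ch (of_nat Q1 * (of_nat Q2 * x), 0) = 1" "ch (0, of_nat Q2 * (of_nat Q1 * y)) = 1"
      using Q1(2) Q2(2) of_nat_mult_mem that by blast+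
    then have "ch (of_nat (Q1 * Q2) * x, 0) = 1" "ch (0, of_nat (Q1 * Q2) * y) = 1"
      by (simp_all add: mult.assoc mult.left_commute)
    moreover have "(of_nat (Q1 * Q2) * x, 0) \<in> A \<times> A" "(0, of_nat (Q1 * Q2) * y) \<in> A \<times> A"
      using of_nat_mult_mem[OF that(1), of "Q1 * Q2"] of_nat_mult_mem[OF that(2), of "Q1 * Q2"] zero_mem
      by simp_all
    moreover have "(of_nat (Q1 * Q2) * x, of_nat (Q1 * Q2) * y)
        = (of_nat (Q1 * Q2) * x, 0) + (0, of_nat (Q1 * Q2) * y)" by simp
    ultimately show ?thesis using ch unfolding character_def by (metis mult_1)
  qed
  moreover have "Q1 * Q2 > 0" using Q1(1) Q2(1) by simp
  ultimately show ?thesis using that by blast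
qed

text \<open>The constituent characters of a unitary representation of A^2 with SL(2,A)-invariant
  trace are permuted by SL(2,A); hence each has a finite orbit and is trivial on some (QA)^2.\<close>
lemma invariant_trace_characters_periodic:
  fixes \<mu> :: "complex \<times> complex \<Rightarrow> complex^'k^'k"
  assumes fin: "finite E" and chars: "\<forall>e\<in>E. character (A \<times> A) (ch e)"
    and trace: "\<forall>t\<in>A \<times> A. trace (\<mu> t) = (\<Sum>e\<in>E. ch e t)"
    and inv: "\<forall>g\<in>SL2 A. \<forall>t\<in>A \<times> A. trace (\<mu> (SL2_act g t)) = trace (\<mu> t)"
    and e: "e \<in> E"
  shows "\<exists>Q>0. \<forall>x\<in>A. \<forall>y\<in>A. ch e (of_nat Q * x, of_nat Q * y) = 1"
proof -
  have orbit: "\<forall>g\<in>SL2 A. twist (A \<times> A) g (ch e) \<in> ch ` E"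
  proof
    fix g assume g: "g \<in> SL2 A"
    have "(\<Sum>e\<in>E. ch e (SL2_act g t)) = (\<Sum>e\<in>E. ch e t)" if t: "t \<in> A \<times> A" for t
    proof -
      have "(\<Sum>e\<in>E. ch e (SL2_act g t)) = trace (\<mu> (SL2_act g t))"
        using bspec[OF trace SL2_act_mem[OF g t]] by simp
      also have "\<dots> = trace (\<mu> t)" using inv g t by blast
      also have "\<dots> = (\<Sum>e\<in>E. ch e t)" using bspec[OF trace t] by simp
      finally show ?thesis .
    qed
    then show "twist (A \<times> A) g (ch e) \<in> ch ` E"
      by (intro twist_mem_family[OF fin chars _ g e]) blast
  qed
  have "character (A \<times> A) (ch e)" using chars e by blast
  then obtain Q where "Q > 0" "\<forall>x\<in>A. \<forall>y\<in>A. ch e (of_nat Q * x, of_nat Q * y) = 1"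
    by (rule finite_orbit_character_period[OF _ finite_imageI[OF fin] orbit])
  then show ?thesis by blast
qed

text \<open>Finitely many characters with periods have a common period, the product.\<close>
lemma common_period:
  assumes "finite E" and "\<forall>e\<in>E. \<exists>Q>0. \<forall>x\<in>A. \<forall>y\<in>A. ch e (of_nat Q * x, of_nat Q * y) = 1"
  obtains q :: nat where "q \<noteq> 0" "\<forall>e\<in>E. \<forall>x\<in>A. \<forall>y\<in>A. ch e (of_nat q * x, of_nat q * y) = 1"
proof -
  obtain Q where Q: "\<forall>e\<in>E. Q e > 0 \<and> (\<forall>x\<in>A. \<forall>y\<in>A. ch e (of_nat (Q e) * x, of_nat (Q e) * y) = 1)"
    using bchoice[OF assms(2)] by blast
  define q where "q = (\<Prod>e\<in>E. Q e)"
  have "ch e (of_nat q * x, of_nat q * y) = 1" if e: "e \<in> E" and "x \<in> A" "y \<in> A" for e x y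
  proof -
    have "Q e dvd q" unfolding q_def using assms(1) e by (rule dvd_prod_eqI) simp
    then obtain r where "q = Q e * r" by (rule dvdE)
    then show ?thesis using Q e of_nat_mult_mem[OF \<open>x \<in> A\<close>, of r] of_nat_mult_mem[OF \<open>y \<in> A\<close>, of r]
      by (simp add: mult.assoc)
  qed
  moreover have "q \<noteq> 0" using Q assms(1) by (simp add: q_def)
  ultimately show ?thesis using that by blast
qed

end

lemma localization_complex_subring:
  assumes B: "subring_C B" and SB: "S \<subseteq> B" and S: "mult_closed S" "0 \<notin> S"
  shows "complex_subring (localization B S)"
proof -
  have B1: "1 \<in> B" and Bops: "\<And>x y. x \<in> B \<Longrightarrow> y \<in> B \<Longrightarrow> x + y \<in> B \<and> x - y \<in> B \<and> x * y \<in> B"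
    using B by (auto simp: subring_C_def)
  have S1: "1 \<in> S" and Smul: "\<And>x y. x \<in> S \<Longrightarrow> y \<in> S \<Longrightarrow> x * y \<in> S"
    using S(1) by (auto simp: mult_closed_def)
  have B0: "0 \<in> B" using Bops[OF B1 B1] by simp
  have elim: "\<And>x P. x \<in> localization B S \<Longrightarrow> (\<And>b s. b \<in> B \<Longrightarrow> s \<in> S \<Longrightarrow> x = b / s \<Longrightarrow> P) \<Longrightarrow> P"
    and intro: "\<And>b s. b \<in> B \<Longrightarrow> s \<in> S \<Longrightarrow> b / s \<in> localization B S"
    unfolding localization_def by blast+
  show ?thesis
  proof
    fix m :: nat
    have "of_nat m \<in> B" by (induction m) (use B0 B1 Bops in auto)
    then show "of_nat m \<in> localization B S" using intro[OF _ S1] by simp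
  next
    fix x y assume x: "x \<in> localization B S" and y: "y \<in> localization B S"
    obtain b s b' s' where b: "b \<in> B" "s \<in> S" "x = b / s" and b': "b' \<in> B" "s' \<in> S" "y = b' / s'"
      using elim[OF x] elim[OF y] by metis
    have "s \<noteq> 0" "s' \<noteq> 0" using b(2) b'(2) S(2) by auto
    then have "x + y = (b * s' + b' * s) / (s * s')" by (simp add: b b' field_simps)
    moreover have "b * s' + b' * s \<in> B" using Bops b b' SB by blast
    ultimately show "x + y \<in> localization B S" using intro Smul b(2) b'(2) by simp
    have "x * y = (b * b') / (s * s')" by (simp add: b b')
    moreover have "b * b' \<in> B" using Bops b b' by blast
    ultimately show "x * y \<in> localization B S" using intro Smul b(2) b'(2) by simp
  next
    fix x assume "x \<in> localization B S"
    then obtain b s where b: "b \<in> B" "s \<in> S" "x = b / s" by (rule elim)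
    have "0 - b \<in> B" using B0 Bops b(1) by blast
    then have "(0 - b) / s \<in> localization B S" using intro b(2) by blast
    then show "- x \<in> localization B S" using b(3) by simp
  qed
qed

theorem lemma4p4:
  fixes K B S :: "complex set"
    and \<mu> :: "complex \<times> complex \<Rightarrow> complex^'k^'k"
  assumes "number_field K"
    and "is_order K B"
    and "S \<subseteq> B" and "mult_closed S" and "0 \<notin> S"
    and unit: "\<forall>t \<in> localization B S \<times> localization B S. unitary_mat (\<mu> t)"
    and hom: "\<forall>t \<in> localization B S \<times> localization B S. \<forall>u \<in> localization B S \<times> localization B S.
                \<mu> (t + u) = \<mu> t ** \<mu> u"
    and inv: "\<forall>g \<in> SL2 (localization B S). \<forall>t \<in> localization B S \<times> localization B S.
                trace (\<mu> (SL2_act g t)) = trace (\<mu> t)"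
  shows "\<exists>q::nat. q \<noteq> 0 \<and>
           (\<forall>x \<in> localization B S. \<forall>y \<in> localization B S. \<mu> (of_nat q * x, of_nat q * y) = mat 1)"
proof -
  define A where "A = localization B S"
  interpret complex_subring A
    unfolding A_def using assms(2-5) by (intro localization_complex_subring) (simp_all add: is_order_def)
  have rep: "unitary_rep (A \<times> A) \<mu>" using unit hom by (simp add: unitary_rep_def A_def)
  obtain E :: "(complex^'k) set" and ch where E: "finite E" "\<forall>e\<in>E. character (A \<times> A) (ch e)"
      "\<forall>t\<in>A \<times> A. trace (\<mu> t) = (\<Sum>e\<in>E. ch e t)"
    by (rule unitary_rep_characters[OF add_subgroup_pairs rep])
  have "\<forall>e\<in>E. \<exists>Q>0. \<forall>x\<in>A. \<forall>y\<in>A. ch e (of_nat Q * x, of_nat Q * y) = 1"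
    using invariant_trace_characters_periodic[OF E] inv unfolding A_def by blast
  then obtain q where q: "q \<noteq> 0" "\<forall>e\<in>E. \<forall>x\<in>A. \<forall>y\<in>A. ch e (of_nat q * x, of_nat q * y) = 1"
    by (rule common_period[OF E(1)])
  have "\<mu> (of_nat q * x, of_nat q * y) = mat 1" if "x \<in> A" "y \<in> A" for x y
  proof (rule unitary_rep_trivial[OF add_subgroup_pairs rep E])
    show "(of_nat q * x, of_nat q * y) \<in> A \<times> A" using that of_nat_mult_mem by blast
    show "\<forall>e\<in>E. ch e (of_nat q * x, of_nat q * y) = 1" using q(2) that by blast
  qed
  with q(1) show ?thesis unfolding A_def by blast
qed

end
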